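(* Let $(\mathcal S,\mathcal A,P,r)$ be any finite MDP (general/multichain) and $(g^\star,h^\star)$ a solution of the modified Bellman equations. Let $V^0\in\mathbb R^n$, $0\le\lambda_k<1$ for $k\ge1$, and $V^k=\lambda_kV^0+(1-\lambda_k)TV^{k-1}$ for $k\ge1$ (Anchored Value Iteration). Then for every $k\ge1$, \[\Big\|\frac{V^k-V^0}{\sum_{i=1}^k\prod_{j=i}^k(1-\lambda_j)}-g^\star\Big\|_\infty\le\frac{2(1-\lambda_k)}{\sum_{i=1}^k\prod_{j=i}^k(1-\lambda_j)}\|V^0-h^\star\|_\infty.\]
   Context: An MDP $(\mathcal S,\mathcal A,P,r)$ has finite state space $\mathcal S$ ($|\mathcal S|=n$, functions identified with $\mathbb R^n$), finite action space, transition probabilities $P(s'\mid s,a)$ and bounded reward $r$. The Bellman optimality operator is $(TV)(s)=\max_a\{r(s,a)+\sum_{s'}P(s'\mid s,a)V(s')\}$. $g^\star(s)=\max_\pi\liminf_{T\to\infty}\frac1T\mathbb E_\pi[\sum_{t=0}^{T-1}r(s_t,a_t)\mid s_0=s]$. A pair $(g,h)$ solves the modified Bellman equations if $\max_a\sum_{s'}P(s'\mid s,a)g(s')=g(s)$ and $\max_a\{r(s,a)+\sum_{s'}P(s'\mid s,a)h(s')\}=h(s)+g(s)$ for all $s$, with some policy attaining both maxima simultaneously; the first component of any solution equals $g^\star$. *)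

theory Defs
  imports Main "HOL-Analysis.Analysis"
begin

definition is_mdp :: "('s::finite \<Rightarrow> 'a::finite \<Rightarrow> 's \<Rightarrow> real) \<Rightarrow> bool" where
  "is_mdp P \<longleftrightarrow> (\<forall>s a s'. 0 \<le> P s a s') \<and> (\<forall>s a. (\<Sum>s'\<in>UNIV. P s a s') = 1)"

definition bellman_T ::
  "('s::finite \<Rightarrow> 'a::finite \<Rightarrow> 's \<Rightarrow> real) \<Rightarrow> ('s \<Rightarrow> 'a \<Rightarrow> real) \<Rightarrow> ('s \<Rightarrow> real) \<Rightarrow> ('s \<Rightarrow> real)" where
  "bellman_T P r V = (\<lambda>s. Max (range (\<lambda>a. r s a + (\<Sum>s'\<in>UNIV. P s a s' * V s'))))"

definition modified_bellman_solution ::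
  "('s::finite \<Rightarrow> 'a::finite \<Rightarrow> 's \<Rightarrow> real) \<Rightarrow> ('s \<Rightarrow> 'a \<Rightarrow> real) \<Rightarrow> ('s \<Rightarrow> real) \<Rightarrow> ('s \<Rightarrow> real) \<Rightarrow> bool" where
  "modified_bellman_solution P r g h \<longleftrightarrow>
     (\<forall>s. Max (range (\<lambda>a. \<Sum>s'\<in>UNIV. P s a s' * g s')) = g s) \<and>
     (\<forall>s. Max (range (\<lambda>a. r s a + (\<Sum>s'\<in>UNIV. P s a s' * h s'))) = h s + g s) \<and>
     (\<exists>\<pi>::'s \<Rightarrow> 'a. \<forall>s. (\<Sum>s'\<in>UNIV. P s (\<pi> s) s' * g s') = g s \<and>
                        r s (\<pi> s) + (\<Sum>s'\<in>UNIV. P s (\<pi> s) s' * h s') = h s + g s)"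

definition sup_norm :: "('s::finite \<Rightarrow> real) \<Rightarrow> real" where
  "sup_norm x = Max (range (\<lambda>s. \<bar>x s\<bar>))"

end

theory Submission
  imports Defs
begin

text \<open>The weights \<open>S k = (\<Sum>i=1..k. \<Prod>j=i..k. 1 - lam j)\<close> satisfy \<open>S 0 = 0\<close> and
  \<open>S k = (1 - lam k) * (1 + S (k - 1))\<close>. The modified Bellman equations give
  \<open>T (h + c g) = h + (c + 1) g\<close> for \<open>c \<ge> 0\<close>, so the comparison sequence \<open>U k = h + S k g\<close>
  obeys the anchored recursion \<open>U k = lam k h + (1 - lam k) T (U (k - 1))\<close>, with anchor \<open>h\<close>
  in place of \<open>V 0\<close>. Since \<open>T\<close> is nonexpansive in the sup norm, induction gives
  \<open>\<parallel>V k - U k\<parallel> \<le> \<parallel>V 0 - h\<parallel>\<close> for all \<open>k\<close>. Finally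
  \<open>V k - V 0 - S k g = (1 - lam k) (T (V (k - 1)) - T (U (k - 1)) + h - V 0)\<close>,
  whose norm is at most \<open>2 (1 - lam k) \<parallel>V 0 - h\<parallel>\<close>; divide by \<open>S k > 0\<close>.\<close>

lemma abs_le_sup_norm: "\<bar>x s\<bar> \<le> sup_norm x"
  unfolding sup_norm_def by (rule Max_ge) auto

lemma sup_norm_le: "(\<And>s. \<bar>x s\<bar> \<le> c) \<Longrightarrow> sup_norm x \<le> c"
  unfolding sup_norm_def by (subst Max_le_iff) auto

lemma kernel_sum_le_shift:
  assumes mdp: "is_mdp P" and le: "\<And>t. V t \<le> W t + d"
  shows "(\<Sum>s'\<in>UNIV. P s a s' * V s') \<le> (\<Sum>s'\<in>UNIV. P s a s' * W s') + d"
proof -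
  have "(\<Sum>s'\<in>UNIV. P s a s' * V s') \<le> (\<Sum>s'\<in>UNIV. P s a s' * (W s' + d))"
    using mdp le unfolding is_mdp_def by (intro sum_mono mult_left_mono) auto
  also have "\<dots> = (\<Sum>s'\<in>UNIV. P s a s' * W s') + d * (\<Sum>s'\<in>UNIV. P s a s')"
    by (simp add: algebra_simps sum.distrib sum_distrib_left)
  also have "\<dots> = (\<Sum>s'\<in>UNIV. P s a s' * W s') + d"
    using mdp unfolding is_mdp_def by simp
  finally show ?thesis .
qed

lemma bellman_T_le_shift:
  assumes mdp: "is_mdp P" and le: "\<And>t. V t \<le> W t + d"
  shows "bellman_T P r V s \<le> bellman_T P r W s + d"
proof -
  have "r s a + (\<Sum>s'\<in>UNIV. P s a s' * V s') \<le> bellman_T P r W s + d" for a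
  proof -
    have "r s a + (\<Sum>s'\<in>UNIV. P s a s' * W s') \<le> bellman_T P r W s"
      unfolding bellman_T_def by (rule Max_ge) auto
    moreover from mdp le have "(\<Sum>s'\<in>UNIV. P s a s' * V s') \<le> (\<Sum>s'\<in>UNIV. P s a s' * W s') + d"
      by (rule kernel_sum_le_shift)
    ultimately show ?thesis by linarith
  qed
  then show ?thesis
    unfolding bellman_T_def[of P r V] by (subst Max_le_iff) auto
qed

lemma bellman_T_nonexpansive:
  assumes mdp: "is_mdp P" and close: "\<And>t. \<bar>V t - W t\<bar> \<le> d"
  shows "\<bar>bellman_T P r V s - bellman_T P r W s\<bar> \<le> d"
proof -
  have "bellman_T P r V s \<le> bellman_T P r W s + d"
    using close by (intro bellman_T_le_shift[OF mdp]) (simp add: abs_le_iff algebra_simps)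
  moreover have "bellman_T P r W s \<le> bellman_T P r V s + d"
    using close by (intro bellman_T_le_shift[OF mdp]) (simp add: abs_le_iff algebra_simps)
  ultimately show ?thesis by linarith
qed

lemma bellman_T_solution_ray:
  assumes sol: "modified_bellman_solution P r g h" and c: "c \<ge> 0"
  shows "bellman_T P r (\<lambda>s. h s + c * g s) s = h s + (c + 1) * g s"
proof -
  let ?Q = "\<lambda>a. r s a + (\<Sum>s'\<in>UNIV. P s a s' * (h s' + c * g s'))"
  have split: "?Q a = (r s a + (\<Sum>s'\<in>UNIV. P s a s' * h s')) + c * (\<Sum>s'\<in>UNIV. P s a s' * g s')"
    for a by (simp add: algebra_simps sum.distrib sum_distrib_left)
  from sol have max_g: "Max (range (\<lambda>a. \<Sum>s'\<in>UNIV. P s a s' * g s')) = g s"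
    and max_h: "Max (range (\<lambda>a. r s a + (\<Sum>s'\<in>UNIV. P s a s' * h s'))) = h s + g s"
    unfolding modified_bellman_solution_def by auto
  from sol obtain \<pi> where \<pi>: "(\<Sum>s'\<in>UNIV. P s (\<pi> s) s' * g s') = g s"
      "r s (\<pi> s) + (\<Sum>s'\<in>UNIV. P s (\<pi> s) s' * h s') = h s + g s"
    unfolding modified_bellman_solution_def by blast
  have upper: "?Q a \<le> h s + (c + 1) * g s" for a
  proof -
    have "r s a + (\<Sum>s'\<in>UNIV. P s a s' * h s') \<le> h s + g s"
      unfolding max_h[symmetric] by (rule Max_ge) auto
    moreover have "(\<Sum>s'\<in>UNIV. P s a s' * g s') \<le> g s"
      unfolding max_g[symmetric] by (rule Max_ge) auto
    then have "c * (\<Sum>s'\<in>UNIV. P s a s' * g s') \<le> c * g s"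
      using c by (rule mult_left_mono)
    ultimately show ?thesis unfolding split by (simp add: algebra_simps)
  qed
  have attained: "?Q (\<pi> s) = h s + (c + 1) * g s"
    unfolding split \<pi> by (simp add: algebra_simps)
  show ?thesis unfolding bellman_T_def
  proof (rule antisym)
    show "Max (range ?Q) \<le> h s + (c + 1) * g s"
      using upper by (subst Max_le_iff) auto
    show "h s + (c + 1) * g s \<le> Max (range ?Q)"
      unfolding attained[symmetric] by (rule Max_ge) auto
  qed
qed

definition anchor_weight :: "(nat \<Rightarrow> real) \<Rightarrow> nat \<Rightarrow> real" where
  "anchor_weight lam k = (\<Sum>i=1..k. \<Prod>j=i..k. (1 - lam j))"

lemma anchor_weight_0 [simp]: "anchor_weight lam 0 = 0"
  unfolding anchor_weight_def by simp

lemma anchor_weight_Suc: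
  "anchor_weight lam (Suc m) = (1 - lam (Suc m)) * (1 + anchor_weight lam m)"
proof -
  have "anchor_weight lam (Suc m)
      = (\<Sum>i=1..m. \<Prod>j=i..Suc m. (1 - lam j)) + (1 - lam (Suc m))"
    unfolding anchor_weight_def by (simp add: sum.cl_ivl_Suc)
  also have "(\<Sum>i=1..m. \<Prod>j=i..Suc m. (1 - lam j))
      = (\<Sum>i=1..m. (1 - lam (Suc m)) * (\<Prod>j=i..m. (1 - lam j)))"
    by (rule sum.cong) (auto simp: prod.cl_ivl_Suc)
  finally show ?thesis
    unfolding anchor_weight_def by (simp add: sum_distrib_left algebra_simps)
qed

lemma anchor_weight_nonneg:
  assumes "\<And>j. j \<ge> 1 \<Longrightarrow> lam j \<le> 1"
  shows "anchor_weight lam m \<ge> 0"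
proof (induction m)
  case (Suc m)
  then show ?case
    using assms[of "Suc m"] by (simp add: anchor_weight_Suc)
qed simp

locale anchored_value_iteration =
  fixes P :: "'s::finite \<Rightarrow> 'a::finite \<Rightarrow> 's \<Rightarrow> real"
    and r :: "'s \<Rightarrow> 'a \<Rightarrow> real"
    and g h :: "'s \<Rightarrow> real"
    and V :: "nat \<Rightarrow> 's \<Rightarrow> real"
    and lam :: "nat \<Rightarrow> real"
  assumes mdp: "is_mdp P"
    and sol: "modified_bellman_solution P r g h"
    and lam_bounds: "\<And>j. j \<ge> 1 \<Longrightarrow> 0 \<le> lam j \<and> lam j < 1"
    and avi: "\<And>j. j \<ge> 1 \<Longrightarrow>
               V j = (\<lambda>s. lam j * V 0 s + (1 - lam j) * bellman_T P r (V (j - 1)) s)"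
begin

abbreviation S :: "nat \<Rightarrow> real" where
  "S \<equiv> anchor_weight lam"

abbreviation comparison :: "nat \<Rightarrow> 's \<Rightarrow> real" where
  "comparison m \<equiv> \<lambda>s. h s + S m * g s"

abbreviation D :: real where
  "D \<equiv> sup_norm (\<lambda>s. V 0 s - h s)"

lemma lam_Suc: "0 \<le> lam (Suc m)" "lam (Suc m) < 1"
  using lam_bounds[of "Suc m"] by auto

lemma V_Suc: "V (Suc m) s = lam (Suc m) * V 0 s + (1 - lam (Suc m)) * bellman_T P r (V m) s"
  using avi[of "Suc m"] by simp

lemma S_nonneg: "S m \<ge> 0"
  using lam_bounds by (intro anchor_weight_nonneg) (simp add: less_imp_le)

lemma S_Suc_pos: "S (Suc m) > 0"
  using lam_Suc[of m] S_nonneg[of m] by (simp add: anchor_weight_Suc)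

lemma bellman_T_comparison: "bellman_T P r (comparison m) s = h s + (S m + 1) * g s"
  by (rule bellman_T_solution_ray[OF sol S_nonneg])

lemma anchor_distance: "\<bar>V 0 s - h s\<bar> \<le> D"
  by (rule abs_le_sup_norm)

lemma iterate_close_to_comparison: "\<bar>V m s - comparison m s\<bar> \<le> D"
proof (induction m arbitrary: s)
  case 0
  show ?case using anchor_distance by simp
next
  case (Suc m)
  let ?l = "lam (Suc m)" and ?\<delta> = "bellman_T P r (V m) s - bellman_T P r (comparison m) s"
  have split: "V (Suc m) s - comparison (Suc m) s = ?l * (V 0 s - h s) + (1 - ?l) * ?\<delta>"
    unfolding V_Suc anchor_weight_Suc bellman_T_comparison by (simp add: algebra_simps)
  have anchor_part: "\<bar>?l * (V 0 s - h s)\<bar> \<le> ?l * D"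
    using lam_Suc[of m] anchor_distance by (simp add: abs_mult mult_left_mono)
  from mdp Suc.IH have "\<bar>?\<delta>\<bar> \<le> D"
    by (rule bellman_T_nonexpansive)
  then have iterate_part: "\<bar>(1 - ?l) * ?\<delta>\<bar> \<le> (1 - ?l) * D"
    using lam_Suc[of m] by (simp add: abs_mult mult_left_mono)
  have "\<bar>V (Suc m) s - comparison (Suc m) s\<bar> \<le> ?l * D + (1 - ?l) * D"
    unfolding split by (rule order_trans[OF abs_triangle_ineq add_mono[OF anchor_part iterate_part]])
  then show ?case by (simp add: algebra_simps)
qed

lemma increment_deviation:
  "\<bar>V (Suc m) s - V 0 s - S (Suc m) * g s\<bar> \<le> 2 * (1 - lam (Suc m)) * D"
proof -
  let ?l = "lam (Suc m)" and ?\<delta> = "bellman_T P r (V m) s - bellman_T P r (comparison m) s"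
  have split: "V (Suc m) s - V 0 s - S (Suc m) * g s = (1 - ?l) * (?\<delta> + (h s - V 0 s))"
    unfolding V_Suc anchor_weight_Suc bellman_T_comparison by (simp add: algebra_simps)
  from mdp iterate_close_to_comparison have "\<bar>?\<delta>\<bar> \<le> D"
    by (rule bellman_T_nonexpansive)
  then have bound: "\<bar>?\<delta> + (h s - V 0 s)\<bar> \<le> 2 * D"
    using anchor_distance[of s] by (simp add: abs_le_iff)
  have "\<bar>V (Suc m) s - V 0 s - S (Suc m) * g s\<bar> = (1 - ?l) * \<bar>?\<delta> + (h s - V 0 s)\<bar>"
    unfolding split using lam_Suc[of m] by (simp add: abs_mult)
  also have "\<dots> \<le> (1 - ?l) * (2 * D)"
    using bound by (rule mult_left_mono) (use lam_Suc[of m] in simp)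
  finally show ?thesis by (simp add: algebra_simps)
qed

lemma normalized_increment_deviation:
  "\<bar>(V (Suc m) s - V 0 s) / S (Suc m) - g s\<bar> \<le> 2 * (1 - lam (Suc m)) / S (Suc m) * D"
proof -
  have "(V (Suc m) s - V 0 s) / S (Suc m) - g s = (V (Suc m) s - V 0 s - S (Suc m) * g s) / S (Suc m)"
    using S_Suc_pos[of m] by (simp add: field_simps)
  then show ?thesis
    using increment_deviation S_Suc_pos[of m] by (simp add: abs_divide divide_right_mono)
qed

end

theorem theorem9:
  fixes P :: "'s::finite \<Rightarrow> 'a::finite \<Rightarrow> 's \<Rightarrow> real"
    and r :: "'s \<Rightarrow> 'a \<Rightarrow> real"
    and g h :: "'s \<Rightarrow> real"
    and V :: "nat \<Rightarrow> 's \<Rightarrow> real"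
    and lam :: "nat \<Rightarrow> real"
    and k :: nat
  assumes mdp: "is_mdp P"
    and sol: "modified_bellman_solution P r g h"
    and lam_bounds: "\<And>j. j \<ge> 1 \<Longrightarrow> 0 \<le> lam j \<and> lam j < 1"
    and avi: "\<And>j. j \<ge> 1 \<Longrightarrow>
               V j = (\<lambda>s. lam j * V 0 s + (1 - lam j) * bellman_T P r (V (j - 1)) s)"
    and k: "k \<ge> 1"
  shows "sup_norm (\<lambda>s. (V k s - V 0 s) / (\<Sum>i=1..k. \<Prod>j=i..k. (1 - lam j)) - g s)
         \<le> 2 * (1 - lam k) / (\<Sum>i=1..k. \<Prod>j=i..k. (1 - lam j)) * sup_norm (\<lambda>s. V 0 s - h s)"
proof -
  interpret anchored_value_iteration P r g h V lam
    using mdp sol lam_bounds avi by unfold_locales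
  obtain m where "k = Suc m" using k by (cases k) auto
  then show ?thesis
    using normalized_increment_deviation[of m]
    by (intro sup_norm_le) (simp add: anchor_weight_def)
qed

end
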